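(* In the setting of the backward and forward Euler schemes for a single-station $M/M/m$ queue (defined in the context), for every $\tau\ge1$ the pairs $(N^b_\tau,D^b_{\tau+1})$ and $(N^f_{\tau-1}+A_\tau,D^f_\tau)$ are identical in distribution; consequently $E[N^b_\tau]-E[N^f_\tau]=E[D^f_\tau]$ for every $\tau\ge1$.
   Context: Fix $m\ge1$, $\mu>0$, $\lambda>0$, $h>0$. For integer $x\ge0$, "$D\sim\mathrm{GenerateDeparture}(x,m,\mu,h)$" means $D$ has the law of the number of departures during $[0,h]$ of a pure departure process started from $x$ customers, i.e. a continuous-time Markov chain on $\{0,1,\dots\}$ jumping from $y$ to $y-1$ at rate $\min(y,m)\mu$. Let $A_1,A_2,\dots$ be i.i.d. $\mathrm{Poisson}(\lambda h)$. Backward scheme: $N^b_0=0$ and $N^b_\tau=N^b_{\tau-1}+A_\tau-D^b_\tau$, where conditionally on all previously generated quantities and $A_\tau$, $D^b_\tau\sim\mathrm{GenerateDeparture}(N^b_{\tau-1},m,\mu,h)$. Forward scheme: $N^f_0=0$ and $N^f_\tau=N^f_{\tau-1}+A_\tau-D^f_\tau$, where conditionally on all previously generated quantities and $A_\tau$, $D^f_\tau\sim\mathrm{GenerateDeparture}(N^f_{\tau-1}+A_\tau,m,\mu,h)$. *)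

theory Defs
  imports "HOL-Probability.Probability"
begin

text \<open>The pure departure process started from x customers jumps y -> y-1 at rate
  min(y,m) mu. It is constructed in the standard way from independent exponential
  holding times: the i-th departure (i = 1..x) occurs when the chain is in state
  x - i + 1, so its holding time T_i is exponential with rate min(x-i+1, m) mu.\<close>

definition dep_rate :: "nat \<Rightarrow> real \<Rightarrow> nat \<Rightarrow> nat \<Rightarrow> real" where
  "dep_rate m mu x i = real (min (x + 1 - i) m) * mu"

definition holding_times :: "nat \<Rightarrow> real \<Rightarrow> nat \<Rightarrow> (nat \<Rightarrow> real) measure" where
  "holding_times m mu x =
     PiM {1..x} (\<lambda>i. density lborel (exponential_density (dep_rate m mu x i)))"

definition departures_by :: "real \<Rightarrow> nat \<Rightarrow> (nat \<Rightarrow> real) \<Rightarrow> nat" where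
  "departures_by h x T = card {k \<in> {1..x}. (\<Sum>i = 1..k. T i) \<le> h}"

definition departure_law :: "nat \<Rightarrow> nat \<Rightarrow> real \<Rightarrow> real \<Rightarrow> nat measure" where
  "departure_law x m mu h = distr (holding_times m mu x) (count_space UNIV) (departures_by h x)"

definition GenerateDeparture :: "nat \<Rightarrow> nat \<Rightarrow> real \<Rightarrow> real \<Rightarrow> nat pmf" where
  "GenerateDeparture x m mu h = embed_pmf (\<lambda>k. measure (departure_law x m mu h) {k})"

text \<open>A trajectory of length t is the list [(A_1,D_1,N_1), ..., (A_t,D_t,N_t)].\<close>

type_synonym traj = "(nat \<times> nat \<times> nat) list"

definition N_at :: "traj \<Rightarrow> nat \<Rightarrow> nat" where
  "N_at tr t = (if t = 0 then 0 else snd (snd (tr ! (t - 1))))"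

definition A_at :: "traj \<Rightarrow> nat \<Rightarrow> nat" where
  "A_at tr t = fst (tr ! (t - 1))"

definition D_at :: "traj \<Rightarrow> nat \<Rightarrow> nat" where
  "D_at tr t = fst (snd (tr ! (t - 1)))"

fun backward_traj :: "nat \<Rightarrow> real \<Rightarrow> real \<Rightarrow> real \<Rightarrow> nat \<Rightarrow> traj pmf" where
  "backward_traj m mu lam h 0 = return_pmf []"
| "backward_traj m mu lam h (Suc t) =
     bind_pmf (backward_traj m mu lam h t) (\<lambda>tr.
     bind_pmf (poisson_pmf (lam * h)) (\<lambda>a.
     bind_pmf (GenerateDeparture (N_at tr t) m mu h) (\<lambda>d.
     return_pmf (tr @ [(a, d, N_at tr t + a - d)]))))"

fun forward_traj :: "nat \<Rightarrow> real \<Rightarrow> real \<Rightarrow> real \<Rightarrow> nat \<Rightarrow> traj pmf" where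
  "forward_traj m mu lam h 0 = return_pmf []"
| "forward_traj m mu lam h (Suc t) =
     bind_pmf (forward_traj m mu lam h t) (\<lambda>tr.
     bind_pmf (poisson_pmf (lam * h)) (\<lambda>a.
     bind_pmf (GenerateDeparture (N_at tr t + a) m mu h) (\<lambda>d.
     return_pmf (tr @ [(a, d, N_at tr t + a - d)]))))"

end

theory Submission
  imports Defs
begin

text \<open>Both schemes update the queue length n by adding Poisson arrivals a and removing
  d \<sim> GenerateDeparture(n') departures; they differ only in whether n' is taken before or
  after the arrivals. Since d \<le> n' always, n + a - d = (n - d) + a, so arrivals and departures
  commute, and an induction on \<tau> shows that N^b_\<tau> has the law of N^f_{\<tau>-1} + A_\<tau>. Both
  schemes draw the next departures from GenerateDeparture of exactly these quantities, so the
  pairs agree in law. Taking expectations in N^f_\<tau> = (N^f_{\<tau>-1} + A_\<tau>) - D^f_\<tau> gives the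
  identity of means; all terms are integrable since the queue grows by at most Poisson
  arrivals per step.\<close>

lemma prob_space_holding_times:
  assumes "m \<ge> 1" "mu > 0"
  shows "prob_space (holding_times m mu x)"
  unfolding holding_times_def
proof (rule prob_space_PiM)
  fix i assume "i \<in> {1..x}"
  then have "dep_rate m mu x i > 0" using assms by (auto simp: dep_rate_def)
  then show "prob_space (density lborel (exponential_density (dep_rate m mu x i)))"
    by (rule prob_space_exponential_density)
qed

lemma measurable_departures_by:
  "departures_by h x \<in> measurable (holding_times m mu x) (count_space UNIV)"
  unfolding departures_by_def
proof (rule measurable_card)
  fix k
  let ?M = "holding_times m mu x"
  show "{T \<in> space ?M. k \<in> {k \<in> {1..x}. (\<Sum>i = 1..k. T i) \<le> h}} \<in> sets ?M"
  proof (cases "k \<in> {1..x}")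
    case False
    then have "{T \<in> space ?M. k \<in> {k \<in> {1..x}. (\<Sum>i = 1..k. T i) \<le> h}} = {}"
      by blast
    then show ?thesis by (simp only: sets.empty_sets)
  next
    case True
    have "(\<lambda>T. \<Sum>i = 1..k. T i) \<in> borel_measurable ?M"
      unfolding holding_times_def
    proof (rule borel_measurable_sum)
      fix i assume "i \<in> {1..k}"
      with True have "i \<in> {1..x}" by auto
      from measurable_component_singleton[OF this,
          of "\<lambda>i. density lborel (exponential_density (dep_rate m mu x i))"]
      show "(\<lambda>T. T i) \<in> borel_measurable
              (PiM {1..x} (\<lambda>i. density lborel (exponential_density (dep_rate m mu x i))))"
        by (simp only: measurable_density_eq2 measurable_lborel1)
    qed
    then have "{T \<in> space ?M. (\<Sum>i = 1..k. T i) \<le> h} \<in> sets ?M"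
      unfolding borel_measurable_iff_le by blast
    moreover have "{T \<in> space ?M. k \<in> {k \<in> {1..x}. (\<Sum>i = 1..k. T i) \<le> h}}
        = {T \<in> space ?M. (\<Sum>i = 1..k. T i) \<le> h}"
      using True by blast
    ultimately show ?thesis by (simp only:)
  qed
qed

lemma pmf_GenerateDeparture:
  assumes "m \<ge> 1" "mu > 0"
  shows "pmf (GenerateDeparture x m mu h) k = measure (departure_law x m mu h) {k}"
proof -
  interpret prob_space "departure_law x m mu h"
    unfolding departure_law_def
    by (rule prob_space.prob_space_distr[OF prob_space_holding_times[OF assms]
          measurable_departures_by])
  have "(\<integral>\<^sup>+k. ennreal (measure (departure_law x m mu h) {k}) \<partial>count_space UNIV)
      = (\<integral>\<^sup>+k. emeasure (departure_law x m mu h) {k} \<partial>count_space UNIV)"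
    by (simp add: emeasure_eq_measure)
  also have "\<dots> = emeasure (departure_law x m mu h) UNIV"
    by (rule emeasure_countable_singleton[symmetric]) (auto simp: departure_law_def)
  also have "\<dots> = 1"
    using emeasure_space_1 by (simp add: departure_law_def space_distr)
  finally show ?thesis
    unfolding GenerateDeparture_def by (rule pmf_embed_pmf[OF measure_nonneg])
qed

lemma set_pmf_GenerateDeparture:
  assumes "m \<ge> 1" "mu > 0"
  shows "set_pmf (GenerateDeparture x m mu h) \<subseteq> {..x}"
proof
  fix d assume d: "d \<in> set_pmf (GenerateDeparture x m mu h)"
  have "departures_by h x T \<le> card {1..x}" for T
    unfolding departures_by_def by (rule card_mono) auto
  then have "departures_by h x T \<le> x" for T by simp
  then have "d > x \<Longrightarrow> departures_by h x -` {d} \<inter> space (holding_times m mu x) = {}"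
    by (auto dest: leD)
  then have "d > x \<Longrightarrow> measure (departure_law x m mu h) {d} = 0"
    unfolding departure_law_def by (simp add: measure_distr[OF measurable_departures_by])
  with d show "d \<in> {..x}"
    by (auto simp: set_pmf_eq pmf_GenerateDeparture[OF assms] not_le[symmetric])
qed

lemma GenerateDeparture_0:
  assumes "m \<ge> 1" "mu > 0"
  shows "GenerateDeparture 0 m mu h = return_pmf 0"
  using set_pmf_GenerateDeparture[OF assms, of 0 h]
  by (simp add: set_pmf_subset_singleton[symmetric])

lemma nn_integral_poisson_pmf_finite:
  assumes "r > 0"
  shows "(\<integral>\<^sup>+a. ennreal (real a) \<partial>measure_pmf (poisson_pmf r)) < \<infinity>"
proof -
  let ?f = "\<lambda>a::nat. r ^ a / fact a * exp (-r) * real a"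
  have "summable (\<lambda>n::nat. r ^ n / fact n)"
    using summable_exp by (simp add: field_simps divide_inverse [symmetric])
  moreover have "?f (Suc n) = (r * exp (-r)) * (r ^ n / fact n)" for n
    by (simp add: field_simps del: of_nat_Suc)
  ultimately have "summable (\<lambda>n. ?f (Suc n))" by (simp only: summable_mult)
  then have "summable ?f" by (subst summable_Suc_iff[symmetric])
  have "(\<integral>\<^sup>+a. ennreal (real a) \<partial>measure_pmf (poisson_pmf r)) = (\<Sum>a. ennreal (?f a))"
    using assms by (simp add: nn_integral_measure_pmf nn_integral_count_space_nat
        ennreal_mult'[symmetric] mult.commute)
  also have "\<dots> < \<infinity>"
    using \<open>summable ?f\<close> assms by (simp add: ennreal_suminf_neq_top less_top[symmetric])
  finally show ?thesis .
qed

lemma bind_map_pmf_add_diff_commute: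
  fixes p q :: "nat pmf"
  assumes "set_pmf q \<subseteq> {..n}"
  shows "bind_pmf p (\<lambda>a. map_pmf (\<lambda>d. n + a - d) q) = bind_pmf q (\<lambda>d. map_pmf (\<lambda>a. n - d + a) p)"
  unfolding map_pmf_def
  by (subst bind_commute_pmf) (use assms in \<open>auto intro!: bind_pmf_cong\<close>)

lemma N_at_snoc: "k \<le> length tr \<Longrightarrow> N_at (tr @ [x]) k = N_at tr k"
  by (auto simp: N_at_def nth_append)

lemma N_at_snoc_last: "length tr = t \<Longrightarrow> N_at (tr @ [x]) (Suc t) = snd (snd x)"
  by (simp add: N_at_def nth_append)

lemma A_at_snoc_last: "length tr = t \<Longrightarrow> A_at (tr @ [x]) (Suc t) = fst x"
  by (simp add: A_at_def nth_append)

lemma D_at_snoc_last: "length tr = t \<Longrightarrow> D_at (tr @ [x]) (Suc t) = fst (snd x)"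
  by (simp add: D_at_def nth_append)

lemma length_backward_traj: "tr \<in> set_pmf (backward_traj m mu lam h t) \<Longrightarrow> length tr = t"
  by (induction t arbitrary: tr) auto

lemma length_forward_traj: "tr \<in> set_pmf (forward_traj m mu lam h t) \<Longrightarrow> length tr = t"
  by (induction t arbitrary: tr) auto

lemma map_backward_traj_Suc:
  "map_pmf f (backward_traj m mu lam h (Suc t)) =
     bind_pmf (backward_traj m mu lam h t) (\<lambda>tr. bind_pmf (poisson_pmf (lam * h)) (\<lambda>a.
       map_pmf (\<lambda>d. f (tr @ [(a, d, N_at tr t + a - d)])) (GenerateDeparture (N_at tr t) m mu h)))"
  by (simp add: map_bind_pmf) (simp add: map_pmf_def)

lemma map_forward_traj_Suc:
  "map_pmf f (forward_traj m mu lam h (Suc t)) =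
     bind_pmf (forward_traj m mu lam h t) (\<lambda>tr. bind_pmf (poisson_pmf (lam * h)) (\<lambda>a.
       map_pmf (\<lambda>d. f (tr @ [(a, d, N_at tr t + a - d)])) (GenerateDeparture (N_at tr t + a) m mu h)))"
  by (simp add: map_bind_pmf) (simp add: map_pmf_def)

definition backward_count :: "nat \<Rightarrow> real \<Rightarrow> real \<Rightarrow> real \<Rightarrow> nat \<Rightarrow> nat pmf" where
  "backward_count m mu lam h t = map_pmf (\<lambda>tr. N_at tr t) (backward_traj m mu lam h t)"

definition forward_count_with_arrivals :: "nat \<Rightarrow> real \<Rightarrow> real \<Rightarrow> real \<Rightarrow> nat \<Rightarrow> nat pmf" where
  "forward_count_with_arrivals m mu lam h t =
     map_pmf (\<lambda>tr. N_at tr t + A_at tr (Suc t)) (forward_traj m mu lam h (Suc t))"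

lemma backward_count_0: "backward_count m mu lam h 0 = return_pmf 0"
  by (simp add: backward_count_def N_at_def)

lemma backward_count_Suc:
  "backward_count m mu lam h (Suc t) =
     bind_pmf (backward_count m mu lam h t) (\<lambda>n. bind_pmf (poisson_pmf (lam * h)) (\<lambda>a.
       map_pmf (\<lambda>d. n + a - d) (GenerateDeparture n m mu h)))"
  unfolding backward_count_def map_backward_traj_Suc bind_map_pmf
  by (auto simp: N_at_snoc_last length_backward_traj intro!: bind_pmf_cong map_pmf_cong)

lemma backward_count_departure:
  "map_pmf (\<lambda>tr. (N_at tr t, D_at tr (Suc t))) (backward_traj m mu lam h (Suc t)) =
     bind_pmf (backward_count m mu lam h t) (\<lambda>n. map_pmf (Pair n) (GenerateDeparture n m mu h))"
  unfolding backward_count_def map_backward_traj_Suc bind_map_pmf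
  by (auto simp: N_at_snoc D_at_snoc_last length_backward_traj intro!: bind_pmf_cong map_pmf_cong)

lemma forward_count_with_arrivals_eq:
  "forward_count_with_arrivals m mu lam h t =
     bind_pmf (forward_traj m mu lam h t) (\<lambda>tr. map_pmf (\<lambda>a. N_at tr t + a) (poisson_pmf (lam * h)))"
  unfolding forward_count_with_arrivals_def map_forward_traj_Suc
  by (auto simp: N_at_snoc A_at_snoc_last length_forward_traj map_pmf_def intro!: bind_pmf_cong)

lemma forward_count_with_arrivals_departure:
  "map_pmf (\<lambda>tr. (N_at tr t + A_at tr (Suc t), D_at tr (Suc t))) (forward_traj m mu lam h (Suc t)) =
     bind_pmf (forward_count_with_arrivals m mu lam h t)
       (\<lambda>x. map_pmf (Pair x) (GenerateDeparture x m mu h))"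
  unfolding forward_count_with_arrivals_eq map_forward_traj_Suc bind_assoc_pmf bind_map_pmf
  by (auto simp: N_at_snoc A_at_snoc_last D_at_snoc_last length_forward_traj
      intro!: bind_pmf_cong map_pmf_cong)

lemma forward_traj_Suc_balance:
  assumes "m \<ge> 1" "mu > 0" "tr \<in> set_pmf (forward_traj m mu lam h (Suc t))"
  shows "D_at tr (Suc t) \<le> N_at tr t + A_at tr (Suc t)"
    and "N_at tr (Suc t) = N_at tr t + A_at tr (Suc t) - D_at tr (Suc t)"
  using assms(3) set_pmf_GenerateDeparture[OF assms(1,2)]
  by (auto simp: subset_iff N_at_snoc N_at_snoc_last A_at_snoc_last D_at_snoc_last length_forward_traj)

lemma forward_count_with_arrivals_0:
  "forward_count_with_arrivals m mu lam h 0 = poisson_pmf (lam * h)"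
  by (simp add: forward_count_with_arrivals_eq N_at_def bind_return_pmf)

lemma forward_count_Suc:
  assumes "m \<ge> 1" "mu > 0"
  shows "map_pmf (\<lambda>tr. N_at tr (Suc t)) (forward_traj m mu lam h (Suc t)) =
     bind_pmf (forward_count_with_arrivals m mu lam h t)
       (\<lambda>x. map_pmf (\<lambda>d. x - d) (GenerateDeparture x m mu h))"
proof -
  have "map_pmf (\<lambda>tr. N_at tr (Suc t)) (forward_traj m mu lam h (Suc t)) =
      map_pmf (\<lambda>(x, d). x - d)
        (map_pmf (\<lambda>tr. (N_at tr t + A_at tr (Suc t), D_at tr (Suc t))) (forward_traj m mu lam h (Suc t)))"
    unfolding map_pmf_comp
    by (rule map_pmf_cong) (simp_all add: forward_traj_Suc_balance[OF assms])
  then show ?thesis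
    by (simp add: forward_count_with_arrivals_departure map_bind_pmf map_pmf_comp
        del: forward_traj.simps)
qed

lemma forward_count_with_arrivals_Suc:
  assumes "m \<ge> 1" "mu > 0"
  shows "forward_count_with_arrivals m mu lam h (Suc t) =
     bind_pmf (forward_count_with_arrivals m mu lam h t) (\<lambda>x. bind_pmf (GenerateDeparture x m mu h)
       (\<lambda>d. map_pmf (\<lambda>a. x - d + a) (poisson_pmf (lam * h))))"
proof -
  have "forward_count_with_arrivals m mu lam h (Suc t) =
      bind_pmf (map_pmf (\<lambda>tr. N_at tr (Suc t)) (forward_traj m mu lam h (Suc t)))
        (\<lambda>n. map_pmf (\<lambda>a. n + a) (poisson_pmf (lam * h)))"
    by (simp add: forward_count_with_arrivals_eq bind_map_pmf del: forward_traj.simps)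
  then show ?thesis
    by (simp only: forward_count_Suc[OF assms] bind_assoc_pmf bind_map_pmf)
qed

lemma backward_count_Suc_eq_forward_count_with_arrivals:
  assumes "m \<ge> 1" "mu > 0"
  shows "backward_count m mu lam h (Suc t) = forward_count_with_arrivals m mu lam h t"
proof (induction t)
  case 0
  show ?case
    by (simp add: backward_count_Suc backward_count_0 forward_count_with_arrivals_0
        GenerateDeparture_0[OF assms] bind_return_pmf bind_return_pmf')
next
  case (Suc t)
  show ?case
    unfolding backward_count_Suc[of _ _ _ _ "Suc t"] Suc.IH
      forward_count_with_arrivals_Suc[OF assms]
    by (intro bind_pmf_cong refl bind_map_pmf_add_diff_commute set_pmf_GenerateDeparture[OF assms])
qed

lemma nn_integral_backward_count_le:
  "(\<integral>\<^sup>+n. ennreal (real n) \<partial>measure_pmf (backward_count m mu lam h t))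
     \<le> of_nat t * (\<integral>\<^sup>+a. ennreal (real a) \<partial>measure_pmf (poisson_pmf (lam * h)))"
  (is "?I t \<le> _ * ?C")
proof (induction t)
  case 0
  show ?case by (simp add: backward_count_0)
next
  case (Suc t)
  let ?N = "measure_pmf (backward_count m mu lam h t)"
  have "?I (Suc t) = (\<integral>\<^sup>+n. \<integral>\<^sup>+a. \<integral>\<^sup>+d. ennreal (real (n + a - d))
      \<partial>GenerateDeparture n m mu h \<partial>poisson_pmf (lam * h) \<partial>?N)"
    by (simp add: backward_count_Suc del: backward_traj.simps)
  also have "\<dots> \<le> (\<integral>\<^sup>+n. \<integral>\<^sup>+a. ennreal (real n) + ennreal (real a) \<partial>poisson_pmf (lam * h) \<partial>?N)"
  proof (intro nn_integral_mono)
    fix n a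
    have "(\<integral>\<^sup>+d. ennreal (real (n + a - d)) \<partial>GenerateDeparture n m mu h)
        \<le> (\<integral>\<^sup>+d. ennreal (real n) + ennreal (real a) \<partial>GenerateDeparture n m mu h)"
      by (intro nn_integral_mono) (simp add: ennreal_plus[symmetric] del: ennreal_plus)
    then show "(\<integral>\<^sup>+d. ennreal (real (n + a - d)) \<partial>GenerateDeparture n m mu h)
        \<le> ennreal (real n) + ennreal (real a)"
      by (simp add: measure_pmf.emeasure_space_1)
  qed
  also have "\<dots> = ?I t + ?C"
    by (simp add: nn_integral_add measure_pmf.emeasure_space_1)
  also have "\<dots> \<le> of_nat (Suc t) * ?C"
    using Suc.IH by (simp add: algebra_simps add_right_mono)
  finally show ?case .
qed

lemma integrable_backward_count:
  assumes "lam * h > 0"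
  shows "integrable (measure_pmf (backward_count m mu lam h t)) real"
proof -
  have "of_nat t * (\<integral>\<^sup>+a. ennreal (real a) \<partial>measure_pmf (poisson_pmf (lam * h))) < \<infinity>"
    using nn_integral_poisson_pmf_finite[OF assms]
    by (simp add: ennreal_mult_less_top of_nat_less_top)
  from le_less_trans[OF nn_integral_backward_count_le this] show ?thesis
    by (simp add: integrable_iff_bounded)
qed

lemma expectation_forward_count_Suc:
  assumes "m \<ge> 1" "mu > 0"
    and "integrable (measure_pmf (forward_count_with_arrivals m mu lam h t)) real"
  shows "measure_pmf.expectation (forward_traj m mu lam h (Suc t)) (\<lambda>tr. real (N_at tr (Suc t)))
    = measure_pmf.expectation (forward_count_with_arrivals m mu lam h t) real
      - measure_pmf.expectation (forward_traj m mu lam h (Suc t)) (\<lambda>tr. real (D_at tr (Suc t)))"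
proof -
  let ?F = "forward_traj m mu lam h (Suc t)"
  let ?X = "\<lambda>tr. N_at tr t + A_at tr (Suc t)"
  have X: "integrable (measure_pmf ?F) (\<lambda>tr. real (?X tr))"
    using assms(3) by (simp add: forward_count_with_arrivals_def)
  have D: "integrable (measure_pmf ?F) (\<lambda>tr. real (D_at tr (Suc t)))"
    by (rule Bochner_Integration.integrable_bound[OF X])
      (auto intro!: AE_pmfI dest: forward_traj_Suc_balance[OF assms(1,2)])
  have "measure_pmf.expectation ?F (\<lambda>tr. real (N_at tr (Suc t)))
      = measure_pmf.expectation ?F (\<lambda>tr. real (?X tr) - real (D_at tr (Suc t)))"
    by (rule integral_cong_AE)
      (auto intro!: AE_pmfI simp: forward_traj_Suc_balance[OF assms(1,2)] of_nat_diff)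
  also have "\<dots> = measure_pmf.expectation ?F (\<lambda>tr. real (?X tr))
      - measure_pmf.expectation ?F (\<lambda>tr. real (D_at tr (Suc t)))"
    by (rule Bochner_Integration.integral_diff[OF X D])
  finally show ?thesis
    by (simp add: forward_count_with_arrivals_def del: forward_traj.simps)
qed

theorem mainTheorem4:
  fixes m :: nat and mu lam h :: real and \<tau> :: nat
  assumes "m \<ge> 1" and "mu > 0" and "lam > 0" and "h > 0" and "\<tau> \<ge> 1"
  shows "map_pmf (\<lambda>tr. (N_at tr \<tau>, D_at tr (\<tau> + 1))) (backward_traj m mu lam h (\<tau> + 1))
           = map_pmf (\<lambda>tr. (N_at tr (\<tau> - 1) + A_at tr \<tau>, D_at tr \<tau>)) (forward_traj m mu lam h \<tau>)
       \<and> measure_pmf.expectation (backward_traj m mu lam h \<tau>) (\<lambda>tr. real (N_at tr \<tau>))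
           - measure_pmf.expectation (forward_traj m mu lam h \<tau>) (\<lambda>tr. real (N_at tr \<tau>))
         = measure_pmf.expectation (forward_traj m mu lam h \<tau>) (\<lambda>tr. real (D_at tr \<tau>))"
proof -
  obtain t where \<tau>: "\<tau> = Suc t" using assms(5) by (cases \<tau>) auto
  have law: "backward_count m mu lam h (Suc t) = forward_count_with_arrivals m mu lam h t"
    by (rule backward_count_Suc_eq_forward_count_with_arrivals[OF assms(1,2)])
  have "map_pmf (\<lambda>tr. (N_at tr (Suc t), D_at tr (Suc (Suc t)))) (backward_traj m mu lam h (Suc (Suc t)))
      = map_pmf (\<lambda>tr. (N_at tr t + A_at tr (Suc t), D_at tr (Suc t))) (forward_traj m mu lam h (Suc t))"
    by (simp only: backward_count_departure law forward_count_with_arrivals_departure)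
  moreover have "measure_pmf.expectation (backward_traj m mu lam h (Suc t)) (\<lambda>tr. real (N_at tr (Suc t)))
      = measure_pmf.expectation (forward_count_with_arrivals m mu lam h t) real"
    by (simp add: law[symmetric] backward_count_def del: backward_traj.simps)
  moreover have "integrable (measure_pmf (forward_count_with_arrivals m mu lam h t)) real"
    using integrable_backward_count[of lam h m mu "Suc t"] assms(3,4) by (simp add: law)
  ultimately show ?thesis
    using expectation_forward_count_Suc[OF assms(1,2)]
    by (simp add: \<tau> del: forward_traj.simps backward_traj.simps)
qed

end
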